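(* Let $S(A)$ be a regular Stanley sequence with character $\lambda(A)$. Then $\lambda(A)\ge 0$, and $\lambda(A)\ne 1$, $\lambda(A)\ne 3$.
   Context: A set of non-negative integers is 3-free if no three of its elements form an arithmetic progression. For a finite 3-free set $A=\{a_0<\cdots<a_k\}$ of non-negative integers, the Stanley sequence $S(A)=(a_n)_{n\ge0}$ is the increasing sequence with initial terms $a_0,\ldots,a_k$ in which each subsequent $a_{n+1}$ is the smallest integer greater than $a_n$ such that $\{a_0,\ldots,a_{n+1}\}$ is 3-free. Throughout, Stanley sequences are in root position ($a_0=0$). A Stanley sequence $(a_n)$ is independent with character $\lambda$ if for all sufficiently large $k$: $a_{2^k+i}=a_{2^k}+a_i$ for $0\le i<2^k$, and $a_{2^k}=2a_{2^k-1}-\lambda+1$. A Stanley sequence $(a_n)$ is regular with character $\lambda$ if there exist a constant $\sigma$ and an independent Stanley sequence $(a'_n)$ of character $\lambda$ such that for all large $k$ and $0\le i<2^k$: $a_{2^k-\sigma+i}=a_{2^k-\sigma}+a'_i$ and $a_{2^k-\sigma}=2a_{2^k-\sigma-1}-\lambda+1$ (these data are unique). *)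

theory Defs
  imports Main
begin

definition three_free :: "nat set \<Rightarrow> bool" where
  "three_free S \<longleftrightarrow> (\<forall>x\<in>S. \<forall>y\<in>S. \<forall>z\<in>S. x < y \<longrightarrow> y < z \<longrightarrow> x + z \<noteq> 2 * y)"

text \<open>Admissible initial sets: finite, 3-free, and in root position (containing 0, hence a_0 = 0).\<close>
definition stanley_init :: "nat set \<Rightarrow> bool" where
  "stanley_init A \<longleftrightarrow> finite A \<and> three_free A \<and> 0 \<in> A"

fun stanley_list :: "nat set \<Rightarrow> nat \<Rightarrow> nat list" where
  "stanley_list A 0 = []"
| "stanley_list A (Suc n) =
     (let xs = stanley_list A n in
      if n < card A then xs @ [sorted_list_of_set A ! n]
      else xs @ [LEAST m. last xs < m \<and> three_free (insert m (set xs))])"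

definition stanley :: "nat set \<Rightarrow> nat \<Rightarrow> nat" where
  "stanley A n = stanley_list A (Suc n) ! n"

definition is_stanley_seq :: "(nat \<Rightarrow> nat) \<Rightarrow> bool" where
  "is_stanley_seq a \<longleftrightarrow> (\<exists>A. stanley_init A \<and> a = stanley A)"

definition independent :: "(nat \<Rightarrow> nat) \<Rightarrow> int \<Rightarrow> bool" where
  "independent a lam \<longleftrightarrow> (\<exists>K. \<forall>k\<ge>K.
      (\<forall>i<2^k. a (2^k + i) = a (2^k) + a i) \<and>
      int (a (2^k)) = 2 * int (a (2^k - 1)) - lam + 1)"

text \<open>Regular with character lam (sigma an integer constant; indices 2^k - sigma are
  natural numbers for all large k).\<close>
definition regular :: "(nat \<Rightarrow> nat) \<Rightarrow> int \<Rightarrow> bool" where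
  "regular a lam \<longleftrightarrow> (\<exists>(\<sigma>::int) a'. is_stanley_seq a' \<and> independent a' lam \<and>
     (\<exists>K. \<forall>k\<ge>K. 2^k - \<sigma> \<ge> 1 \<and>
        (\<forall>i<2^k. a (nat (2^k - \<sigma>) + i) = a (nat (2^k - \<sigma>)) + a' i) \<and>
        int (a (nat (2^k - \<sigma>))) = 2 * int (a (nat (2^k - \<sigma> - 1))) - lam + 1))"

end

theory Submission
  imports Defs
begin

text \<open>Write \<open>a = S(B)\<close> for an independent Stanley sequence of character \<open>\<lambda>\<close> and, for large \<open>k\<close>,
  \<open>n = 2^k\<close>, \<open>M = a (n - 1)\<close>, so that \<open>a n = 2M + 1 - \<lambda>\<close>. Greedy choice gives \<open>a n \<le> 2M + 1\<close>
  (nothing below \<open>M\<close> can form a progression with \<open>2M + 1\<close>), so \<open>\<lambda> \<ge> 0\<close>. The value \<open>\<lambda> = 1\<close>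
  would make \<open>0, M, 2M\<close> a progression. For \<open>\<lambda> = 3\<close> we have \<open>a n = 2M - 2\<close> and, by independence,
  \<open>a (n + 1) = a n + a 1\<close>: if \<open>a 1 = 1\<close> then \<open>1, M, 2M - 1\<close> is a progression, and otherwise
  \<open>2M - 1\<close> could be added without creating one, so greedy would have chosen it as \<open>a (n + 1)\<close>.
  A regular sequence has the character of an independent Stanley sequence, which is all we use.\<close>

lemma three_free_subset: "three_free S \<Longrightarrow> T \<subseteq> S \<Longrightarrow> three_free T"
  unfolding three_free_def by blast

lemma three_free_no_progression:
  "three_free S \<Longrightarrow> x \<in> S \<Longrightarrow> y \<in> S \<Longrightarrow> z \<in> S \<Longrightarrow> x < y \<Longrightarrow> y < z \<Longrightarrow> x + z \<noteq> 2 * y"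
  unfolding three_free_def by blast

lemma three_free_insert_large:
  assumes "three_free S" and "\<And>x. x \<in> S \<Longrightarrow> 2 * x < m"
  shows "three_free (insert m S)"
  unfolding three_free_def
proof (intro ballI impI)
  fix x y z assume xyz: "x \<in> insert m S" "y \<in> insert m S" "z \<in> insert m S" "x < y" "y < z"
  show "x + z \<noteq> 2 * y"
  proof (cases "z = m")
    case True
    then show ?thesis using xyz assms(2)[of y] by auto
  next
    case False
    then have "z \<in> S" using xyz by simp
    with assms(2) have "z < m" by fastforce
    then have "x \<in> S" "y \<in> S" using xyz by auto
    with \<open>z \<in> S\<close> show ?thesis using assms(1) xyz three_free_no_progression by blast
  qed
qed

lemma three_free_insert_double_minus_one:
  assumes "three_free T" and "4 \<le> M"
    and T_bound: "\<And>w. w \<in> T \<Longrightarrow> (w \<le> M \<and> w \<noteq> 1) \<or> w = 2 * M - 2"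
  shows "three_free (insert (2 * M - 1) T)"
  unfolding three_free_def
proof (intro ballI impI)
  fix x y z assume xyz: "x \<in> insert (2 * M - 1) T" "y \<in> insert (2 * M - 1) T" "z \<in> insert (2 * M - 1) T"
    "x < y" "y < z"
  show "x + z \<noteq> 2 * y"
  proof (cases "z = 2 * M - 1")
    case True
    then have "x \<in> T" "y \<in> T" using xyz by auto
    then have "(x \<le> M \<and> x \<noteq> 1) \<or> x = 2 * M - 2" "(y \<le> M \<and> y \<noteq> 1) \<or> y = 2 * M - 2"
      using T_bound by auto
    with True \<open>x < y\<close> \<open>y < z\<close> \<open>4 \<le> M\<close> show ?thesis
      \<comment> \<open>either \<open>x = 2M - 3\<close>, too large for \<open>T\<close>, or \<open>x \<le> 1\<close> is odd, hence \<open>x = 1\<close>\<close>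
      by (elim disjE conjE; linarith?; presburger)
  next
    case False
    then have "z \<in> T" using xyz by simp
    with T_bound \<open>4 \<le> M\<close> have "z < 2 * M - 1" by fastforce
    then have "x \<in> T" "y \<in> T" using xyz by auto
    with \<open>z \<in> T\<close> show ?thesis using assms(1) xyz three_free_no_progression by blast
  qed
qed

lemma length_stanley_list: "length (stanley_list A n) = n"
  by (induction n) (simp_all add: Let_def)

lemma stanley_list_eq_map: "stanley_list A n = map (stanley A) [0..<n]"
proof (induction n)
  case 0
  then show ?case by simp
next
  case (Suc n)
  have "stanley_list A (Suc n) = stanley_list A n @ [stanley A n]"
    by (simp add: stanley_def Let_def nth_append length_stanley_list)
  with Suc.IH show ?case by simp
qed

lemma stanley_initial: "n < card A \<Longrightarrow> stanley A n = sorted_list_of_set A ! n"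
  by (simp add: stanley_def Let_def nth_append length_stanley_list)

lemma stanley_greedy:
  assumes "card A \<le> n" and "0 < n"
  shows "stanley A n = (LEAST m. stanley A (n - 1) < m \<and> three_free (insert m (stanley A ` {..<n})))"
proof -
  have "stanley A n = stanley_list A (Suc n) ! n"
    by (rule stanley_def)
  also have "\<dots> = (LEAST m. last (stanley_list A n) < m \<and> three_free (insert m (set (stanley_list A n))))"
    using assms(1) by (simp add: Let_def nth_append length_stanley_list)
  also have "last (stanley_list A n) = stanley A (n - 1)"
    using assms(2) by (simp add: stanley_list_eq_map last_map)
  also have "set (stanley_list A n) = stanley A ` {..<n}"
    by (auto simp: stanley_list_eq_map)
  finally show ?thesis .
qed

lemma stanley_least:
  assumes "card A \<le> n" and "0 < n" and "stanley A (n - 1) < m"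
    and "three_free (insert m (stanley A ` {..<n}))"
  shows "stanley A n \<le> m"
  unfolding stanley_greedy[OF assms(1,2)] using assms(3,4) by (rule Least_le[OF conjI])

lemma stanley_greedy_step:
  assumes "card A \<le> n" and "0 < n" and "three_free (stanley A ` {..<n})"
  shows "stanley A (n - 1) < stanley A n \<and> three_free (insert (stanley A n) (stanley A ` {..<n}))"
proof -
  define m where "m = 2 * Max (insert 0 (stanley A ` {..<n})) + stanley A (n - 1) + 1"
  have "2 * x < m" if "x \<in> stanley A ` {..<n}" for x
  proof -
    have "x \<le> Max (insert 0 (stanley A ` {..<n}))"
      using that by (intro Max_ge) auto
    then show ?thesis unfolding m_def by linarith
  qed
  then have "three_free (insert m (stanley A ` {..<n}))"
    using assms(3) by (rule three_free_insert_large[rotated])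
  then show ?thesis
    unfolding stanley_greedy[OF assms(1,2)]
    using LeastI[of "\<lambda>m. stanley A (n - 1) < m \<and> three_free (insert m (stanley A ` {..<n}))" m]
    by (simp add: m_def)
qed

lemma card_pos_if_stanley_init: "stanley_init A \<Longrightarrow> 0 < card A"
  unfolding stanley_init_def using card_gt_0_iff by blast

lemma stanley_in_init: "stanley_init A \<Longrightarrow> n < card A \<Longrightarrow> stanley A n \<in> A"
  by (metis stanley_initial length_sorted_list_of_set nth_mem set_sorted_list_of_set stanley_init_def)

lemma three_free_stanley_prefix:
  assumes "stanley_init A"
  shows "three_free (stanley A ` {..<n})"
proof (induction n)
  case 0
  then show ?case by (simp add: three_free_def)
next
  case (Suc n)
  show ?case
  proof (cases "n < card A")
    case True
    then have "stanley A ` {..<Suc n} \<subseteq> A"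
      using stanley_in_init[OF assms] by auto
    with assms show ?thesis
      unfolding stanley_init_def using three_free_subset by blast
  next
    case False
    then have "0 < n" using card_pos_if_stanley_init[OF assms] by simp
    with False Suc.IH show ?thesis
      using stanley_greedy_step[of A n] by (simp add: lessThan_Suc)
  qed
qed

lemma strict_mono_stanley:
  assumes "stanley_init A"
  shows "strict_mono (stanley A)"
  unfolding strict_mono_Suc_iff
proof
  fix n
  show "stanley A n < stanley A (Suc n)"
  proof (cases "Suc n < card A")
    case True
    have "finite A" using assms unfolding stanley_init_def by simp
    with True show ?thesis
      using sorted_wrt_nth_less[OF strict_sorted_list_of_set, of n "Suc n" A]
      by (simp add: stanley_initial)
  next
    case False
    then show ?thesis
      using stanley_greedy_step[of A "Suc n"] three_free_stanley_prefix[OF assms] by simp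
  qed
qed

lemma stanley_0:
  assumes "stanley_init A"
  shows "stanley A 0 = 0"
proof -
  have "finite A" "0 \<in> A" using assms unfolding stanley_init_def by auto
  then obtain j where "j < card A" "sorted_list_of_set A ! j = 0"
    by (metis in_set_conv_nth length_sorted_list_of_set set_sorted_list_of_set)
  then have "stanley A j = 0" by (simp add: stanley_initial)
  with strict_mono_stanley[OF assms] show ?thesis
    by (metis le_zero_eq strict_mono_less_eq zero_le)
qed

lemma stanley_le_double_Suc:
  assumes "stanley_init A" and "card A \<le> n"
  shows "stanley A n \<le> 2 * stanley A (n - 1) + 1"
proof (rule stanley_least[OF assms(2)])
  show "0 < n" using assms card_pos_if_stanley_init by fastforce
  have "\<And>x. x \<in> stanley A ` {..<n} \<Longrightarrow> x \<le> stanley A (n - 1)"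
    using strict_mono_stanley[OF assms(1)] by (auto simp: strict_mono_less_eq)
  then show "three_free (insert (2 * stanley A (n - 1) + 1) (stanley A ` {..<n}))"
    by (intro three_free_insert_large three_free_stanley_prefix[OF assms(1)]) fastforce
qed simp

lemma stanley_ne_double:
  assumes "stanley_init A" and "1 < n"
  shows "stanley A n \<noteq> 2 * stanley A (n - 1)"
proof
  assume double: "stanley A n = 2 * stanley A (n - 1)"
  have "stanley A 0 < stanley A (n - 1)"
    using strict_mono_stanley[OF assms(1)] assms(2) by (simp add: strict_mono_less)
  then have "0 < stanley A (n - 1)" by (simp add: stanley_0[OF assms(1)])
  moreover have "stanley A 0 \<in> stanley A ` {..<Suc n}" "stanley A (n - 1) \<in> stanley A ` {..<Suc n}"
    "stanley A n \<in> stanley A ` {..<Suc n}"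
    by auto
  ultimately show False
    using three_free_no_progression[OF three_free_stanley_prefix[OF assms(1), of "Suc n"],
        where x = 0 and y = "stanley A (n - 1)" and z = "stanley A n"] double
    by (simp add: stanley_0[OF assms(1)])
qed

lemma stanley_ne_double_minus_two:
  assumes "stanley_init A" and "card A \<le> n" and "4 \<le> stanley A (n - 1)"
    and "stanley A (Suc n) = stanley A n + stanley A 1"
  shows "stanley A n + 2 \<noteq> 2 * stanley A (n - 1)"
proof
  assume double_minus_two: "stanley A n + 2 = 2 * stanley A (n - 1)"
  define a M where "a = stanley A" and "M = stanley A (n - 1)"
  have aM: "a (n - 1) = M" and an: "a n = 2 * M - 2" and shift: "a (Suc n) = a n + a 1"
    and "4 \<le> M"
    using double_minus_two assms(3,4) unfolding a_def M_def by simp_all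
  have mono: "strict_mono a" and a0: "a 0 = 0"
    unfolding a_def using strict_mono_stanley[OF assms(1)] stanley_0[OF assms(1)] by simp_all
  note prefix = three_free_stanley_prefix[OF assms(1), folded a_def]
  have "a 0 < a 1" using mono by (simp add: strict_mono_less)
  with a0 consider "a 1 = 1" | "2 \<le> a 1" by linarith
  then show False
  proof cases
    case 1
    have "a 1 \<in> a ` {..<Suc (Suc n)}" "a (n - 1) \<in> a ` {..<Suc (Suc n)}"
      "a (Suc n) \<in> a ` {..<Suc (Suc n)}"
      by auto
    moreover have "a (Suc n) = 2 * M - 1" using an shift 1 \<open>4 \<le> M\<close> by simp
    moreover have "M < 2 * M - 1" using \<open>4 \<le> M\<close> by linarith
    ultimately show False
      using three_free_no_progression[OF prefix[of "Suc (Suc n)"],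
          where x = "a 1" and y = "a (n - 1)" and z = "a (Suc n)"] 1 aM \<open>4 \<le> M\<close>
      by simp
  next
    case 2
    have T_bound: "(w \<le> M \<and> w \<noteq> 1) \<or> w = 2 * M - 2" if "w \<in> a ` {..<Suc n}" for w
    proof -
      from that obtain j where j: "w = a j" "j < Suc n" by (auto simp: image_iff)
      show ?thesis
      proof (cases "j = n")
        case True
        then show ?thesis using j an by simp
      next
        case False
        with j(2) have "a j \<le> M"
          using strict_mono_less_eq[OF mono, of j "n - 1"] aM by simp
        moreover have "a j \<noteq> 1"
        proof (cases "j = 0")
          case True
          then show ?thesis using a0 by simp
        next
          case False
          then have "a 1 \<le> a j" using strict_mono_less_eq[OF mono, of 1 j] by simp
          with 2 show ?thesis by simp
        qed
        ultimately show ?thesis using j by simp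
      qed
    qed
    have "three_free (insert (2 * M - 1) (a ` {..<Suc n}))"
      using prefix \<open>4 \<le> M\<close> T_bound by (rule three_free_insert_double_minus_one)
    then have "a (Suc n) \<le> 2 * M - 1"
      using stanley_least[of A "Suc n" "2 * M - 1", folded a_def] assms(2) an \<open>4 \<le> M\<close> by simp
    with shift an 2 \<open>4 \<le> M\<close> show False by linarith
  qed
qed

lemma independent_stanley_character:
  assumes B: "stanley_init B" and "independent (stanley B) lam"
  shows "lam \<ge> 0 \<and> lam \<noteq> 1 \<and> lam \<noteq> 3"
proof -
  obtain K where K: "\<And>k. K \<le> k \<Longrightarrow> (\<forall>i<2^k. stanley B (2^k + i) = stanley B (2^k) + stanley B i) \<and>
      int (stanley B (2^k)) = 2 * int (stanley B (2^k - 1)) - lam + 1"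
    using assms(2) unfolding independent_def by blast
  define k where "k = K + card B + 3"
  define n where "n = (2::nat) ^ k"
  have "k < n" unfolding n_def by simp
  then have n: "card B \<le> n" "5 \<le> n" using card_pos_if_stanley_init[OF B] unfolding k_def by auto
  have additive: "\<forall>i<n. stanley B (n + i) = stanley B n + stanley B i"
    and char: "int (stanley B n) = 2 * int (stanley B (n - 1)) - lam + 1"
    using K[of k] unfolding k_def n_def by auto
  have "stanley B (n + 1) = stanley B n + stanley B 1"
    using additive[rule_format, of 1] n(2) by simp
  then have shift: "stanley B (Suc n) = stanley B n + stanley B 1" by simp
  have "n - 1 \<le> stanley B (n - 1)"
    using strict_mono_imp_increasing[OF strict_mono_stanley[OF B]] .
  with n(2) have "4 \<le> stanley B (n - 1)" by linarith
  have "lam \<ge> 0"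
    using stanley_le_double_Suc[OF B n(1)] char by linarith
  moreover have "lam \<noteq> 1"
  proof
    assume "lam = 1"
    with char have "stanley B n = 2 * stanley B (n - 1)" by linarith
    with stanley_ne_double[OF B] n(2) show False by simp
  qed
  moreover have "lam \<noteq> 3"
  proof
    assume "lam = 3"
    with char have "stanley B n + 2 = 2 * stanley B (n - 1)" by linarith
    with stanley_ne_double_minus_two[OF B n(1) \<open>4 \<le> stanley B (n - 1)\<close> shift] show False by simp
  qed
  ultimately show ?thesis by simp
qed

theorem mainTheorem10:
  fixes A :: "nat set" and lam :: int
  assumes "stanley_init A"
    and "regular (stanley A) lam"
  shows "lam \<ge> 0 \<and> lam \<noteq> 1 \<and> lam \<noteq> 3"
proof -
  obtain a' where "is_stanley_seq a'" and "independent a' lam"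
    using assms(2) unfolding regular_def by blast
  then obtain B where "stanley_init B" and "independent (stanley B) lam"
    unfolding is_stanley_seq_def by blast
  then show ?thesis by (rule independent_stanley_character)
qed

end
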